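(* Let $\mathcal G=(\mathcal V,\mathcal E,w)$ be a finite, undirected, connected graph with $n\ge2$ vertices and positive edge weights, and let $\hat L$ be its normalized Laplacian. Let $w_1,\dots,w_r$ be the pairwise distinct values taken by the weights of those $(m,k)$-stars of $\mathcal G$ whose weight is defined, and for each $i$ let $\mathcal S_{w_i}$ be the set of $(m,k)$-stars of $\mathcal G$ of weight $w_i$, with $\deg(\mathcal S_{w_i})=\sum_{S_{m,k}\in\mathcal S_{w_i}}(m-1)$. If $r\ge1$, then $1$ is an eigenvalue of $\hat L$ with algebraic multiplicity at least $\sum_{i=1}^r\deg(\mathcal S_{w_i})$.
   Context: Weighted adjacency matrix: $A_{ij}=w(i,j)$ if $\{i,j\}\in\mathcal E$, else $0$; strength $s(i)=\sum_jA_{ij}$. The normalized Laplacian has entries $\hat L_{ii}=1$, $\hat L_{ij}=-w(i,j)/\sqrt{s(i)s(j)}$ if $i\sim j$, and $0$ otherwise. An $(m,k)$-star of $\mathcal G$ is a pair $(\mathcal V_1,\mathcal V_2)$ of disjoint vertex sets with $|\mathcal V_1|=m\ge2$, $|\mathcal V_2|=k$, $m+k\le n$, such that every vertex of $\mathcal V_1$ is adjacent to every vertex of $\mathcal V_2$ and to no vertex outside $\mathcal V_2$; the sets are uniquely determined, i.e. $\mathcal V_1$ is the set of all vertices whose neighbourhood is exactly $\mathcal V_2$. Its degree is $m-1$. Its weight is defined only when $w(i,j)=w(i',j)$ for all $i,i'\in\mathcal V_1$, $j\in\mathcal V_2$, and then equals $\sum_{j\in\mathcal V_2}w(i,j)$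 for any $i\in\mathcal V_1$. *)

theory Defs
  imports "Jordan_Normal_Form.Char_Poly" "Jordan_Normal_Form.Jordan_Normal_Form"
begin

text \<open>Weighted undirected simple graph on the vertex set {0..<n}:
  E is the (symmetric, irreflexive) adjacency relation, w the edge weight
  (only its values on edges matter).\<close>

definition wgraph :: "nat \<Rightarrow> (nat \<Rightarrow> nat \<Rightarrow> bool) \<Rightarrow> (nat \<Rightarrow> nat \<Rightarrow> real) \<Rightarrow> bool" where
  "wgraph n E w \<longleftrightarrow>
     (\<forall>i j. E i j \<longrightarrow> i < n \<and> j < n) \<and>
     (\<forall>i. \<not> E i i) \<and>
     (\<forall>i j. E i j \<longrightarrow> E j i) \<and>
     (\<forall>i j. E i j \<longrightarrow> w i j = w j i \<and> w i j > 0)"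

definition connected_graph :: "nat \<Rightarrow> (nat \<Rightarrow> nat \<Rightarrow> bool) \<Rightarrow> bool" where
  "connected_graph n E \<longleftrightarrow> (\<forall>i<n. \<forall>j<n. E\<^sup>*\<^sup>* i j)"

definition adj_w :: "(nat \<Rightarrow> nat \<Rightarrow> bool) \<Rightarrow> (nat \<Rightarrow> nat \<Rightarrow> real) \<Rightarrow> nat \<Rightarrow> nat \<Rightarrow> real" where
  "adj_w E w i j = (if E i j then w i j else 0)"

definition strength :: "nat \<Rightarrow> (nat \<Rightarrow> nat \<Rightarrow> bool) \<Rightarrow> (nat \<Rightarrow> nat \<Rightarrow> real) \<Rightarrow> nat \<Rightarrow> real" where
  "strength n E w i = (\<Sum>j<n. adj_w E w i j)"

definition norm_laplacian :: "nat \<Rightarrow> (nat \<Rightarrow> nat \<Rightarrow> bool) \<Rightarrow> (nat \<Rightarrow> nat \<Rightarrow> real) \<Rightarrow> real mat" where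
  "norm_laplacian n E w = mat n n (\<lambda>(i, j).
      if i = j then 1
      else if E i j then - w i j / sqrt (strength n E w i * strength n E w j)
      else 0)"

definition nbhd :: "nat \<Rightarrow> (nat \<Rightarrow> nat \<Rightarrow> bool) \<Rightarrow> nat \<Rightarrow> nat set" where
  "nbhd n E i = {j. j < n \<and> E i j}"

text \<open>(m,k)-star (V1,V2): m = card V1 \<ge> 2, k = card V2, disjoint, m + k \<le> n,
  every vertex of V1 is adjacent exactly to the vertices of V2, and V1 is the set
  of all vertices whose neighbourhood is exactly V2.\<close>

definition is_star :: "nat \<Rightarrow> (nat \<Rightarrow> nat \<Rightarrow> bool) \<Rightarrow> nat set \<Rightarrow> nat set \<Rightarrow> bool" where
  "is_star n E V1 V2 \<longleftrightarrow>
     V1 \<subseteq> {0..<n} \<and> V2 \<subseteq> {0..<n} \<and> V1 \<inter> V2 = {} \<and>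
     card V1 \<ge> 2 \<and> card V1 + card V2 \<le> n \<and>
     (\<forall>i\<in>V1. nbhd n E i = V2) \<and>
     V1 = {v. v < n \<and> nbhd n E v = V2}"

definition star_degree :: "nat set \<Rightarrow> nat" where
  "star_degree V1 = card V1 - 1"

definition star_weight_defined :: "(nat \<Rightarrow> nat \<Rightarrow> real) \<Rightarrow> nat set \<Rightarrow> nat set \<Rightarrow> bool" where
  "star_weight_defined w V1 V2 \<longleftrightarrow> (\<forall>i\<in>V1. \<forall>i'\<in>V1. \<forall>j\<in>V2. w i j = w i' j)"

definition star_weight :: "(nat \<Rightarrow> nat \<Rightarrow> real) \<Rightarrow> nat set \<Rightarrow> nat set \<Rightarrow> real" where
  "star_weight w V1 V2 = (\<Sum>j\<in>V2. w (SOME i. i \<in> V1) j)"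

definition weighted_stars :: "nat \<Rightarrow> (nat \<Rightarrow> nat \<Rightarrow> bool) \<Rightarrow> (nat \<Rightarrow> nat \<Rightarrow> real) \<Rightarrow> (nat set \<times> nat set) set" where
  "weighted_stars n E w = {(V1, V2). is_star n E V1 V2 \<and> star_weight_defined w V1 V2}"

definition star_weights :: "nat \<Rightarrow> (nat \<Rightarrow> nat \<Rightarrow> bool) \<Rightarrow> (nat \<Rightarrow> nat \<Rightarrow> real) \<Rightarrow> real set" where
  "star_weights n E w = (\<lambda>(V1, V2). star_weight w V1 V2) ` weighted_stars n E w"

definition stars_of_weight :: "nat \<Rightarrow> (nat \<Rightarrow> nat \<Rightarrow> bool) \<Rightarrow> (nat \<Rightarrow> nat \<Rightarrow> real) \<Rightarrow> real \<Rightarrow> (nat set \<times> nat set) set" where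
  "stars_of_weight n E w x = {S \<in> weighted_stars n E w. star_weight w (fst S) (snd S) = x}"

definition deg_class :: "nat \<Rightarrow> (nat \<Rightarrow> nat \<Rightarrow> bool) \<Rightarrow> (nat \<Rightarrow> nat \<Rightarrow> real) \<Rightarrow> real \<Rightarrow> nat" where
  "deg_class n E w x = (\<Sum>S\<in>stars_of_weight n E w x. star_degree (fst S))"

end

(* Two vertices of a star have the same neighbourhood, and when the weight of the star is
   defined also the same edge weights; such twins i < j have strengths s(i) = s(j), so the
   columns j and i of the normalized Laplacian differ by exactly e_j - e_i, i.e. e_j - e_i is an
   eigenvector for 1. Pairing every vertex of a star with the least vertex of that star gives
   deg S such pairs per star, on disjoint vertex sets since a star is determined by any of its
   vertices. Subtracting column i from column j in the characteristic matrix, for all these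
   pairs at once, is a unimodular triangular column operation after which each of those columns
   is (x - 1) times a constant column; hence (x - 1)^k divides the characteristic polynomial,
   k being the total degree of all stars with a defined weight. *)

theory Submission
  imports Defs
begin

lemma det_upper_triangular_prod:
  assumes "upper_triangular A" and "A \<in> carrier_mat n n"
  shows "det A = (\<Prod>i = 0..<n. A $$ (i, i))"
  using det_upper_triangular[OF assms] prod_list_diag_prod[of A] assms(2) by simp

lemma linear_power_dvd_char_poly_if_eigen_column_pairs:
  fixes A :: "'a::field mat"
  assumes A: "A \<in> carrier_mat n n" and T: "T \<subseteq> {0..<n}"
    and r: "\<And>j. j \<in> T \<Longrightarrow> r j < j"
    and col: "\<And>j k. j \<in> T \<Longrightarrow> k < n \<Longrightarrow>
       A $$ (k, j) - A $$ (k, r j) = a * ((if k = j then 1 else 0) - (if k = r j then 1 else 0))"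
  shows "[:-a, 1:] ^ card T dvd char_poly A"
proof -
  define M where "M = char_poly_matrix A"
  have M: "M \<in> carrier_mat n n" using A unfolding M_def by simp
  have M_entry: "M $$ (k, j) = (if k = j then [:0, 1:] else 0) - [:A $$ (k, j):]"
    if "k < n" "j < n" for k j
    using A that unfolding M_def char_poly_matrix_def by auto
  have rn: "r j < n" if "j \<in> T" for j using r[OF that] T that by auto
  \<comment> \<open>\<open>M * P\<close> subtracts column \<open>r j\<close> from column \<open>j\<close> for every \<open>j \<in> T\<close>; by \<open>col\<close> the
    new column \<open>j\<close> is \<open>[:-a, 1:]\<close> times \<open>e\<^sub>j - e\<^sub>r\<^sub>j\<close>, which \<open>D\<close> factors out.\<close>
  define P where "P = mat n n (\<lambda>(l, j).
    (if l = j then 1 else 0) - (if j \<in> T \<and> l = r j then 1 else (0::'a poly)))"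
  define G where "G = mat n n (\<lambda>(k, j).
    if j \<in> T then (if k = j then 1 else if k = r j then -1 else 0) else M $$ (k, j))"
  define D where "D = mat n n (\<lambda>(k, j).
    if k = j then (if j \<in> T then [:-a, 1:] else 1) else (0::'a poly))"
  have P: "P \<in> carrier_mat n n" and G: "G \<in> carrier_mat n n" and D: "D \<in> carrier_mat n n"
    unfolding P_def G_def D_def by simp_all
  have r_neq: "j \<noteq> r j" if "j \<in> T" for j using r[OF that] by simp
  have "upper_triangular P"
    by (auto simp: P_def upper_triangular_def dest: r)
  hence "det P = 1"
    using r_neq by (subst det_upper_triangular_prod[OF _ P]) (auto simp: P_def intro!: prod.neutral)
  moreover have "det D = [:-a, 1:] ^ card T"
    using T by (subst det_upper_triangular_prod[OF _ D])
      (auto simp: D_def upper_triangular_def prod.If_cases Int_absorb1)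
  moreover have "M * P = G * D"
  proof (rule eq_matI)
    fix k j assume "k < dim_row (G * D)" and "j < dim_col (G * D)"
    hence k: "k < n" and j: "j < n" using G D by auto
    have "(M * P) $$ (k, j) = M $$ (k, j) - (if j \<in> T then M $$ (k, r j) else 0)"
      using M P k j rn
      by (auto simp: P_def scalar_prod_def right_diff_distrib sum_subtractf if_distrib[of "(*) _"]
          cong: if_cong)
    also have "\<dots> = G $$ (k, j) * D $$ (j, j)"
      using col[of j k] j k rn[of j] r[of j]
      by (auto simp: G_def D_def M_entry algebra_simps one_pCons)
    also have "\<dots> = (G * D) $$ (k, j)"
      using G D k j
      by (simp add: D_def scalar_prod_def if_distrib[of "(*) _"] cong: if_cong)
    finally show "(M * P) $$ (k, j) = (G * D) $$ (k, j)" .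
  qed (use M P G D in auto)
  ultimately have "char_poly A = det G * [:-a, 1:] ^ card T"
    using det_mult[OF M P] det_mult[OF G D] unfolding char_poly_def M_def by simp
  thus ?thesis by (metis dvd_triv_right)
qed

lemma is_starD:
  assumes "is_star n E V1 V2"
  shows "V1 \<subseteq> {0..<n}" and "V2 \<subseteq> {0..<n}" and "2 \<le> card V1"
    and "i \<in> V1 \<Longrightarrow> nbhd n E i = V2" and "V1 = {v. v < n \<and> nbhd n E v = V2}"
  using assms unfolding is_star_def by (elim conjE; blast)+

lemma is_star_finite: "is_star n E V1 V2 \<Longrightarrow> finite V1"
  by (rule finite_subset[OF is_starD(1)]) simp_all

lemma is_star_unique:
  assumes "is_star n E V1 V2" "is_star n E V1' V2'" "i \<in> V1" "i \<in> V1'"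
  shows "V1 = V1'" and "V2 = V2'"
proof -
  show "V2 = V2'" using is_starD(4)[OF assms(1,3)] is_starD(4)[OF assms(2,4)] by (rule trans[OF sym])
  thus "V1 = V1'" using is_starD(5)[OF assms(1)] is_starD(5)[OF assms(2)] by simp
qed

lemma strength_eq_if_twins:
  assumes "nbhd n E i = nbhd n E j" and "\<And>k. k \<in> nbhd n E j \<Longrightarrow> w i k = w j k"
  shows "strength n E w i = strength n E w j"
  unfolding strength_def
proof (intro sum.cong refl)
  fix k assume "k \<in> {..<n}"
  hence "E a k \<longleftrightarrow> k \<in> nbhd n E a" for a by (simp add: nbhd_def)
  thus "adj_w E w i k = adj_w E w j k" using assms by (simp add: adj_w_def)
qed

lemma norm_laplacian_twin_columns:
  assumes G: "wgraph n E w" and i: "i < n" and j: "j < n" and k: "k < n"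
    and twins: "nbhd n E i = nbhd n E j" and weights: "\<And>k. k \<in> nbhd n E j \<Longrightarrow> w i k = w j k"
  shows "norm_laplacian n E w $$ (k, j) - norm_laplacian n E w $$ (k, i)
    = (if k = j then 1 else 0) - (if k = i then 1 else 0)"
proof -
  have sym: "E a b \<Longrightarrow> E b a" and wsym: "E a b \<Longrightarrow> w a b = w b a" and irrefl: "\<not> E a a"
    for a b using G unfolding wgraph_def by blast+
  have adj: "E k a \<longleftrightarrow> k \<in> nbhd n E a" for a
    using k sym by (auto simp: nbhd_def)
  have "\<not> E i j"
    using twins j irrefl by (auto simp: nbhd_def)
  hence "\<not> E j i" using sym by blast
  moreover have "E k i \<longleftrightarrow> E k j"
    using twins by (simp add: adj)
  moreover have "w k i = w k j" if "E k j"
  proof -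
    have "k \<in> nbhd n E j" using that adj by blast
    hence "w k i = w i k" and "w i k = w j k" and "w j k = w k j"
      using twins weights wsym[of k i] wsym[of k j] that by (simp_all add: adj)
    thus ?thesis by simp
  qed
  moreover have "strength n E w i = strength n E w j"
    using twins weights by (rule strength_eq_if_twins)
  ultimately show ?thesis
    using i j k \<open>\<not> E i j\<close> by (auto simp: norm_laplacian_def)
qed

definition star_nonroots :: "nat \<Rightarrow> (nat \<Rightarrow> nat \<Rightarrow> bool) \<Rightarrow> (nat \<Rightarrow> nat \<Rightarrow> real) \<Rightarrow> nat set" where
  "star_nonroots n E w = (\<Union>(V1, V2) \<in> weighted_stars n E w. V1 - {Min V1})"

lemma finite_weighted_stars: "finite (weighted_stars n E w)"
proof (rule finite_subset)
  show "weighted_stars n E w \<subseteq> Pow {0..<n} \<times> Pow {0..<n}"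
    by (auto simp: weighted_stars_def dest: is_starD(1,2))
qed simp

lemma star_nonroots_subset: "star_nonroots n E w \<subseteq> {0..<n}"
  unfolding star_nonroots_def weighted_stars_def by (auto dest: is_starD(1))

lemma star_nonroots_nonempty:
  assumes "weighted_stars n E w \<noteq> {}"
  shows "star_nonroots n E w \<noteq> {}"
proof -
  obtain V1 V2 where S: "(V1, V2) \<in> weighted_stars n E w" using assms by auto
  hence "2 \<le> card V1" by (auto simp: weighted_stars_def dest: is_starD(3))
  hence "\<not> V1 \<subseteq> {Min V1}" using card_mono[of "{Min V1}" V1] by auto
  hence "V1 - {Min V1} \<noteq> {}" by blast
  thus ?thesis using S unfolding star_nonroots_def by blast
qed

lemma card_star_nonroots:
  "card (star_nonroots n E w) = (\<Sum>S\<in>weighted_stars n E w. star_degree (fst S))"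
proof -
  have star: "is_star n E V1 V2" if "(V1, V2) \<in> weighted_stars n E w" for V1 V2
    using that by (simp add: weighted_stars_def)
  have "card (star_nonroots n E w) = (\<Sum>S\<in>weighted_stars n E w. card (fst S - {Min (fst S)}))"
    unfolding star_nonroots_def split_beta
  proof (rule card_UN_disjoint[OF finite_weighted_stars])
    show "\<forall>S\<in>weighted_stars n E w. finite (fst S - {Min (fst S)})"
      by (auto dest!: star is_star_finite)
  next
    show "\<forall>S\<in>weighted_stars n E w. \<forall>S'\<in>weighted_stars n E w. S \<noteq> S' \<longrightarrow>
        (fst S - {Min (fst S)}) \<inter> (fst S' - {Min (fst S')}) = {}"
    proof (intro ballI impI)
      fix S S' assume "S \<in> weighted_stars n E w" "S' \<in> weighted_stars n E w" "S \<noteq> S'"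
      hence "fst S \<inter> fst S' = {}"
        using is_star_unique star[of "fst S" "snd S"] star[of "fst S'" "snd S'"]
        by (metis disjoint_iff prod.collapse)
      thus "(fst S - {Min (fst S)}) \<inter> (fst S' - {Min (fst S')}) = {}" by blast
    qed
  qed
  also have "\<dots> = (\<Sum>S\<in>weighted_stars n E w. star_degree (fst S))"
  proof (rule sum.cong[OF refl])
    fix S assume "S \<in> weighted_stars n E w"
    then obtain V1 V2 where "S = (V1, V2)" and "is_star n E V1 V2"
      using star by (metis prod.collapse)
    hence "finite (fst S)" and "fst S \<noteq> {}"
      using is_star_finite is_starD(3) by fastforce+
    thus "card (fst S - {Min (fst S)}) = star_degree (fst S)"
      by (simp add: star_degree_def)
  qed
  finally show ?thesis .
qed

lemma sum_deg_class_star_weights: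
  "(\<Sum>x\<in>star_weights n E w. deg_class n E w x) = (\<Sum>S\<in>weighted_stars n E w. star_degree (fst S))"
proof -
  have "star_weights n E w = (\<lambda>S. star_weight w (fst S) (snd S)) ` weighted_stars n E w"
    unfolding star_weights_def by (simp add: case_prod_beta')
  thus ?thesis
    unfolding deg_class_def stars_of_weight_def
    by (simp only: sum.image_gen[OF finite_weighted_stars, symmetric])
qed

lemma star_nonroot_twin_root:
  assumes "j \<in> star_nonroots n E w"
  defines "i \<equiv> Min {v. v < n \<and> nbhd n E v = nbhd n E j}"
  shows "i < j" and "i < n" and "j < n" and "nbhd n E i = nbhd n E j"
    and "\<And>k. k \<in> nbhd n E j \<Longrightarrow> w i k = w j k"
proof -
  obtain V1 V2 where S: "(V1, V2) \<in> weighted_stars n E w" and j: "j \<in> V1" "j \<noteq> Min V1"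
    using assms(1) unfolding star_nonroots_def by auto
  have star: "is_star n E V1 V2" and weight: "star_weight_defined w V1 V2"
    using S by (simp_all add: weighted_stars_def)
  have "i = Min V1" unfolding i_def is_starD(5)[OF star] is_starD(4)[OF star j(1)] ..
  moreover have "Min V1 \<in> V1" and "Min V1 \<le> j"
    using is_star_finite[OF star] j(1) by (auto intro: Min_in)
  ultimately have i: "i \<in> V1" and "i < j" using j(2) by auto
  thus "i < j" by simp
  show "i < n" and "j < n" using i j(1) is_starD(1)[OF star] by auto
  show "nbhd n E i = nbhd n E j" using i j(1) is_starD(4)[OF star] by simp
  show "w i k = w j k" if "k \<in> nbhd n E j" for k
    using weight i j(1) that is_starD(4)[OF star j(1)] unfolding star_weight_defined_def by blast
qed

theorem corollary2:
  fixes n :: nat and E :: "nat \<Rightarrow> nat \<Rightarrow> bool" and w :: "nat \<Rightarrow> nat \<Rightarrow> real"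
  assumes "n \<ge> 2"
    and "wgraph n E w"
    and "connected_graph n E"
    and "star_weights n E w \<noteq> {}"
  shows "eigenvalue (norm_laplacian n E w) 1 \<and>
         order 1 (char_poly (norm_laplacian n E w))
           \<ge> (\<Sum>x\<in>star_weights n E w. deg_class n E w x)"
proof -
  let ?A = "norm_laplacian n E w" and ?T = "star_nonroots n E w"
  define r where "r j = Min {v. v < n \<and> nbhd n E v = nbhd n E j}" for j
  have A: "?A \<in> carrier_mat n n" by (simp add: norm_laplacian_def)
  have "[:-1, 1:] ^ card ?T dvd char_poly ?A"
  proof (rule linear_power_dvd_char_poly_if_eigen_column_pairs[OF A star_nonroots_subset])
    fix j k assume j: "j \<in> ?T"
    note twin = star_nonroot_twin_root[OF j, folded r_def]
    show "r j < j" by (fact twin(1))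
    assume "k < n"
    with twin show "?A $$ (k, j) - ?A $$ (k, r j)
        = 1 * ((if k = j then 1 else 0) - (if k = r j then 1 else 0))"
      using norm_laplacian_twin_columns[OF assms(2)] by simp
  qed
  hence order: "card ?T \<le> order 1 (char_poly ?A)"
    using degree_monic_char_poly[OF A] by (intro order_max) auto
  have "weighted_stars n E w \<noteq> {}"
    using assms(4) by (simp add: star_weights_def)
  hence "card ?T > 0"
    using star_nonroots_nonempty finite_subset[OF star_nonroots_subset] by (simp add: card_gt_0_iff)
  hence "eigenvalue ?A 1"
    using order order_root eigenvalue_root_char_poly[OF A] by fastforce
  with order show ?thesis
    by (simp add: card_star_nonroots sum_deg_class_star_weights)
qed

end
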